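(* Let $I\subseteq\mathbb{R}$ be an interval, let $f:I\to\mathbb{R}$ be differentiable on the interior $I^\circ$ of $I$, and let $a,b\in I$ with $a<b$ and $f'\in L^1[a,b]$. Let $s\in(0,1]$, $\alpha\in[0,1]$, $m\in(0,1]$, assume $b/m\in I^\circ$, and let $q>1$ and $p=\frac{q}{q-1}$. If $|f'|^q$ is $s$-$(\alpha,m)$-convex (in the first sense) on $[a,b]$, then $$\left|\frac{f(a)+f(b)}{2}-\frac{1}{b-a}\int_a^b f(x)\,dx\right|\le \frac{b-a}{2^{\frac{p+1}{p}}}\left[v_1|f'(a)|^q+v_2\left|f'\!\left(\frac{b}{m}\right)\right|^q\right]^{1/q},$$ where $v_1=\dfrac{1+2^{\alpha s}(\alpha s)}{2^{\alpha s}(\alpha s+1)(\alpha s+2)}$ and $v_2=m\left(\frac12-v_1\right)$.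
   Context: Let $s\in(0,1]$, $\alpha\in[0,1]$, $m\in(0,1]$. A nonnegative function $g$ is called $s$-$(\alpha,m)$-convex (in the first sense) on $[a,b]$ if for all $x,y\in[a,b]$ (with $y/m$ in the domain of $g$) and all $t\in[0,1]$, $$g(tx+(1-t)y)\le t^{\alpha s}g(x)+m\,(1-t^{\alpha s})\,g\!\left(\frac{y}{m}\right).$$ *)

theory Defs
  imports "HOL-Analysis.Analysis"
begin

text \<open>Real power t^e for t \<ge> 0 with the usual convention 0^0 = 1
  (Isabelle's powr has 0 powr 0 = 0).\<close>
definition rpow :: "real \<Rightarrow> real \<Rightarrow> real" where
  "rpow t e = (if t = 0 then (if e = 0 then 1 else 0) else t powr e)"

definition s_alpha_m_convex ::
  "real \<Rightarrow> real \<Rightarrow> real \<Rightarrow> real set \<Rightarrow> real set \<Rightarrow> (real \<Rightarrow> real) \<Rightarrow> bool" where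
  "s_alpha_m_convex s \<alpha> m S D g \<longleftrightarrow>
     (\<forall>x\<in>S. g x \<ge> 0) \<and>
     (\<forall>x\<in>S. \<forall>y\<in>S. \<forall>t\<in>{0..1}. y / m \<in> D \<longrightarrow>
        g (t * x + (1 - t) * y) \<le> rpow t (\<alpha> * s) * g x + m * (1 - rpow t (\<alpha> * s)) * g (y / m))"

end

theory Submission
  imports Defs
begin

text \<open>Integration by parts writes the trapezoid error \<open>(b - a)/2 * (f a + f b) - \<integral>f\<close> as
  \<open>\<integral> (x - (a + b)/2) f'(x) dx\<close>. Writing \<open>x = t a + (1 - t) b\<close>, the convexity hypothesis bounds
  \<open>\<bar>f'(x)\<bar>^q\<close> by \<open>t^(\<alpha>s) \<bar>f'(a)\<bar>^q + m (1 - t^(\<alpha>s)) \<bar>f'(b/m)\<bar>^q\<close>, whose integral against the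
  tent weight \<open>\<bar>x - (a + b)/2\<bar>\<close> is explicit. Hoelder's inequality for this weight finishes the
  proof. It is obtained from Young's inequality with a free scaling parameter that is optimised
  at the end, so that only the majorant, and not \<open>\<bar>f'\<bar>^q\<close> itself, has to be integrable.\<close>

definition tent_primitive :: "real \<Rightarrow> real \<Rightarrow> real" where
  "tent_primitive k u = u powr (k + 1) / (2 * (k + 1)) - u powr (k + 2) / (k + 2)"

lemma tent_primitive_has_derivative:
  assumes "0 \<le> k" "0 < u"
  shows "(tent_primitive k has_real_derivative (1/2 - u) * u powr k) (at u)"
proof -
  have "(tent_primitive k has_real_derivative
          (k + 1) * u powr (k + 1 - 1) / (2 * (k + 1)) - (k + 2) * u powr (k + 2 - 1) / (k + 2)) (at u)"
    unfolding tent_primitive_def using assms by (auto intro!: derivative_eq_intros)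
  moreover have "(k + 1) * u powr (k + 1 - 1) / (2 * (k + 1)) - (k + 2) * u powr (k + 2 - 1) / (k + 2)
      = (1/2 - u) * u powr k"
  proof -
    have "u powr (k + 2 - 1) = u * u powr k"
      using assms by (simp add: powr_add add.commute)
    moreover have "k + 1 \<noteq> 0" "k + 2 \<noteq> 0" using assms by auto
    then have "(k + 1) * P / (2 * (k + 1)) - (k + 2) * (u * P) / (k + 2) = (1/2 - u) * P" for P
      by (simp add: divide_simps) (simp add: algebra_simps)
    ultimately show ?thesis by simp
  qed
  ultimately show ?thesis by simp
qed

lemma continuous_on_tent_primitive:
  assumes "0 \<le> k"
  shows "continuous_on {0..} (tent_primitive k)"
  unfolding tent_primitive_def using assms
  by (intro continuous_intros continuous_on_powr') auto

lemma tent_weight_has_integral_01: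
  assumes k: "0 \<le> k"
  shows "((\<lambda>u. \<bar>u - 1/2\<bar> * rpow u k) has_integral
           (1 + 2 powr k * k) / (2 powr k * (k + 1) * (k + 2)) / 2) {0..1}"
proof -
  let ?P = "tent_primitive k"
  have cont: "continuous_on {x..y} ?P" if "0 \<le> x" for x y
    using continuous_on_subset[OF continuous_on_tent_primitive[OF k]] that by auto
  have left: "((\<lambda>u. \<bar>u - 1/2\<bar> * rpow u k) has_integral (?P (1/2) - ?P 0)) {0..1/2}"
  proof (rule fundamental_theorem_of_calculus_interior)
    fix u :: real assume "u \<in> {0<..<1/2}"
    then show "(?P has_vector_derivative \<bar>u - 1/2\<bar> * rpow u k) (at u)"
      using tent_primitive_has_derivative[OF k, of u]
      by (simp add: rpow_def has_real_derivative_iff_has_vector_derivative)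
  qed (use cont in auto)
  have right: "((\<lambda>u. \<bar>u - 1/2\<bar> * rpow u k) has_integral (- ?P 1 - - ?P (1/2))) {1/2..1}"
  proof (rule fundamental_theorem_of_calculus_interior)
    fix u :: real assume "u \<in> {1/2<..<1}"
    then show "((\<lambda>u. - ?P u) has_vector_derivative \<bar>u - 1/2\<bar> * rpow u k) (at u)"
      using DERIV_minus[OF tent_primitive_has_derivative[OF k, of u]]
      by (simp add: rpow_def has_real_derivative_iff_has_vector_derivative algebra_simps)
  qed (use cont in \<open>auto intro: continuous_on_minus\<close>)
  have "?P (1/2) - ?P 0 + (- ?P 1 - - ?P (1/2)) = (1 + 2 powr k * k) / (2 powr k * (k + 1) * (k + 2)) / 2"
  proof -
    have "(1/2::real) powr (k + 1) = 1 / (2 * 2 powr k)" "(1/2::real) powr (k + 2) = 1 / (4 * 2 powr k)"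
      by (simp_all add: powr_add powr_divide)
    moreover have "k + 1 \<noteq> 0" "k + 2 \<noteq> 0" using k by auto
    ultimately show ?thesis
      by (simp add: tent_primitive_def divide_simps) algebra
  qed
  with has_integral_combine[OF _ _ left right] show ?thesis by simp
qed

lemma tent_weight_has_integral:
  assumes ab: "a < b" and k: "0 \<le> k"
  shows "((\<lambda>x. \<bar>x - (a + b)/2\<bar> * rpow ((b - x)/(b - a)) k) has_integral
           (b - a)^2 / 2 * ((1 + 2 powr k * k) / (2 powr k * (k + 1) * (k + 2)))) {a..b}"
proof -
  define d where "d = b - a"
  have d: "d > 0" using ab by (simp add: d_def)
  let ?F = "\<lambda>u. \<bar>u - 1/2\<bar> * rpow u k"
  let ?v = "(1 + 2 powr k * k) / (2 powr k * (k + 1) * (k + 2))"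
  have "((\<lambda>x. ?F ((-1/d) * x + b/d)) has_integral (1 / \<bar>-1/d\<bar>) * (?v / 2))
          ((\<lambda>x. (1 / (-1/d)) * x + - ((1 / (-1/d)) * (b/d))) ` {0..1})"
    using has_integral_affinity[of ?F "?v / 2" 0 1 "-1/d" "b/d"] tent_weight_has_integral_01[OF k] d
    by simp
  moreover have "(\<lambda>x. (1 / (-1/d)) * x + - ((1 / (-1/d)) * (b/d))) ` {0..1} = {a..b}"
  proof -
    have "(\<lambda>x. (1 / (-1/d)) * x + - ((1 / (-1/d)) * (b/d))) = (\<lambda>x. (-d) * x + b)"
      using d by (simp add: fun_eq_iff)
    then show ?thesis
      using d by (simp only: image_affinity_atLeastAtMost) (simp add: d_def)
  qed
  ultimately have "((\<lambda>x. ?F ((b - x)/d)) has_integral d * (?v / 2)) {a..b}"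
    using d by (simp add: diff_divide_distrib)
  then have "((\<lambda>x. d * ?F ((b - x)/d)) has_integral d * (d * (?v / 2))) {a..b}"
    by (rule has_integral_mult_right)
  moreover have "(\<lambda>x. d * ?F ((b - x)/d)) = (\<lambda>x. \<bar>x - (a + b)/2\<bar> * rpow ((b - x)/(b - a)) k)"
  proof
    fix x
    have "(b - x)/d - 1/2 = ((a + b)/2 - x) / d"
      using d by (simp add: d_def field_simps)
    then have "d * \<bar>(b - x)/d - 1/2\<bar> = \<bar>x - (a + b)/2\<bar>"
      using d by (simp add: abs_minus_commute)
    then show "d * ?F ((b - x)/d) = \<bar>x - (a + b)/2\<bar> * rpow ((b - x)/(b - a)) k"
      by (simp add: d_def)
  qed
  moreover have "d * (d * (?v / 2)) = (b - a)^2 / 2 * ?v"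
    by (simp add: d_def power2_eq_square mult.commute mult.left_commute)
  ultimately show ?thesis by simp
qed

lemma rpow_zero_right [simp]: "rpow t 0 = 1"
  by (simp add: rpow_def)

lemma tent_weight_majorant_has_integral:
  fixes a b k m A B :: real
  assumes ab: "a < b" and k: "0 \<le> k"
  defines "v \<equiv> (1 + 2 powr k * k) / (2 powr k * (k + 1) * (k + 2))"
  shows "((\<lambda>x. \<bar>x - (a + b)/2\<bar> *
             (rpow ((b - x)/(b - a)) k * A + m * (1 - rpow ((b - x)/(b - a)) k) * B))
           has_integral (b - a)^2 / 2 * (v * A + m * (1/2 - v) * B)) {a..b}"
proof -
  let ?w = "\<lambda>x. \<bar>x - (a + b)/2\<bar>"
  let ?R = "\<lambda>x. rpow ((b - x)/(b - a)) k"
  have wR: "((\<lambda>x. ?w x * ?R x) has_integral (b - a)^2 / 2 * v) {a..b}"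
    using tent_weight_has_integral[OF ab k] unfolding v_def .
  have w: "(?w has_integral (b - a)^2 / 4) {a..b}"
    using tent_weight_has_integral[OF ab order_refl] by simp
  have combination: "((\<lambda>x. (?w x * ?R x) * A + (m * B) * ?w x - (m * B) * (?w x * ?R x)) has_integral
          ((b - a)^2 / 2 * v) * A + (m * B) * ((b - a)^2 / 4) - (m * B) * ((b - a)^2 / 2 * v)) {a..b}"
    by (intro has_integral_diff has_integral_add has_integral_mult_left has_integral_mult_right wR w)
  have "(\<lambda>x. (?w x * ?R x) * A + (m * B) * ?w x - (m * B) * (?w x * ?R x))
      = (\<lambda>x. ?w x * (?R x * A + m * (1 - ?R x) * B))"
    by (simp add: fun_eq_iff algebra_simps)
  moreover have "((b - a)^2 / 2 * v) * A + (m * B) * ((b - a)^2 / 4) - (m * B) * ((b - a)^2 / 2 * v)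
      = (b - a)^2 / 2 * (v * A + m * (1/2 - v) * B)"
    by (simp add: algebra_simps)
  ultimately show ?thesis using combination by (simp only:)
qed

lemma Youngs_inequality_param:
  fixes y l p q :: real
  assumes y: "0 \<le> y" and l: "0 < l" and q: "1 < q" and p: "p = q / (q - 1)"
  shows "y \<le> l / p + y powr q / (q * l powr (q - 1))"
proof -
  have p1: "1 < p" unfolding p using q by (simp add: less_divide_eq)
  have pq: "1/p + 1/q = 1" unfolding p using q by (simp add: field_simps)
  define c where "c = l powr (1/p)"
  have c: "0 < c" using l by (simp add: c_def)
  have "c * (y / c) \<le> c powr p / p + (y / c) powr q / q"
    by (rule Youngs_inequality[OF p1 q pq]) (use c y in auto)
  moreover have "c powr p = l" using l p1 by (simp add: c_def powr_powr)
  moreover have "(y / c) powr q = y powr q / l powr (q - 1)"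
    using y c l p q by (simp add: powr_divide c_def powr_powr)
  ultimately show ?thesis using c by (simp add: field_simps)
qed

lemma Young_bound_at_optimal_scale:
  fixes W V p q :: real
  assumes W: "0 < W" and V: "0 < V" and q: "1 < q" and p: "p = q / (q - 1)"
  defines "l \<equiv> (V / W) powr (1/q)"
  shows "l * W / p + V / (q * l powr (q - 1)) = W powr (1/p) * V powr (1/q)"
proof -
  have l: "0 < l" using W V by (simp add: l_def)
  have pq: "1/p = 1 - 1/q" unfolding p using q by (simp add: field_simps)
  have "l powr (q - 1) = l powr q / l" using l by (simp add: powr_diff)
  moreover have "l powr q = V / W" using W V q by (simp add: l_def powr_powr)
  ultimately have "V / (q * l powr (q - 1)) = l * W / q"
    using l W q by (simp add: field_simps)
  then have "l * W / p + V / (q * l powr (q - 1)) = l * W * (1/p + 1/q)"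
    by (simp add: field_simps)
  also have "\<dots> = W powr (1/p) * V powr (1/q)"
    using W V pq by (simp add: l_def powr_divide powr_diff)
  finally show ?thesis .
qed

lemma le_Hoelder_bound_of_Young_bounds:
  fixes x W V p q :: real
  assumes W: "0 \<le> W" and V: "0 \<le> V" and q: "1 < q" and p: "p = q / (q - 1)"
    and bound: "\<And>l. 0 < l \<Longrightarrow> x \<le> l * W / p + V / (q * l powr (q - 1))"
  shows "x \<le> W powr (1/p) * V powr (1/q)"
proof -
  have p0: "0 < p" unfolding p using q by simp
  consider "W = 0" | "0 < W" "V = 0" | "0 < W" "0 < V" using W V by fastforce
  then show ?thesis
  proof cases
    case 1
    have "x \<le> 0 + e" if e: "0 < e" for e
    proof (cases "V = 0")
      case True
      then show ?thesis using bound[of 1] 1 e by simp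
    next
      case False
      define l where "l = (V / (q * e)) powr (1 / (q - 1))"
      have "l powr (q - 1) = V / (q * e)"
        using False V q e by (simp add: l_def powr_powr)
      then show ?thesis
        using bound[of l] 1 False V q e by (simp add: l_def)
    qed
    then show ?thesis using 1 p0 field_le_epsilon[of x 0] by simp
  next
    case 2
    have "x \<le> 0 + e" if "0 < e" for e
      using bound[of "e * p / W"] 2 that p0 by simp
    then show ?thesis using 2 q field_le_epsilon[of x 0] by simp
  next
    case 3
    then show ?thesis
      using bound[of "(V / W) powr (1/q)"] Young_bound_at_optimal_scale[OF 3 q p] by simp
  qed
qed

lemma abs_integral_weighted_le_Hoelder:
  fixes w g h :: "real \<Rightarrow> real" and S :: "real set" and W V p q :: real
  assumes W: "((\<lambda>x. \<bar>w x\<bar>) has_integral W) S"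
    and V: "((\<lambda>x. \<bar>w x\<bar> * h x) has_integral V) S"
    and wg: "(\<lambda>x. w x * g x) integrable_on S"
    and gh: "\<And>x. x \<in> S \<Longrightarrow> \<bar>g x\<bar> powr q \<le> h x"
    and q: "1 < q" and p: "p = q / (q - 1)"
  shows "\<bar>integral S (\<lambda>x. w x * g x)\<bar> \<le> W powr (1/p) * V powr (1/q)"
proof (rule le_Hoelder_bound_of_Young_bounds[OF _ _ q p])
  show "0 \<le> W" by (rule has_integral_nonneg[OF W]) simp
  show "0 \<le> V"
  proof (rule has_integral_nonneg[OF V])
    fix x assume "x \<in> S"
    then have "0 \<le> h x" using gh[of x] powr_ge_zero[of "\<bar>g x\<bar>" q] by linarith
    then show "0 \<le> \<bar>w x\<bar> * h x" by simp
  qed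
  fix l :: real assume l: "0 < l"
  let ?bound = "\<lambda>x. l / p * \<bar>w x\<bar> + \<bar>w x\<bar> * h x / (q * l powr (q - 1))"
  have "(?bound has_integral l / p * W + V / (q * l powr (q - 1))) S"
    by (intro has_integral_add has_integral_mult_right has_integral_divide W V)
  then have bound: "(?bound has_integral l * W / p + V / (q * l powr (q - 1))) S"
    by simp
  have "norm (integral S (\<lambda>x. w x * g x)) \<le> integral S ?bound"
  proof (rule integral_norm_bound_integral[OF wg])
    show "?bound integrable_on S" using bound by blast
    fix x assume x: "x \<in> S"
    have "\<bar>g x\<bar> \<le> l / p + \<bar>g x\<bar> powr q / (q * l powr (q - 1))"
      by (rule Youngs_inequality_param[OF _ l q p]) simp
    also have "\<dots> \<le> l / p + h x / (q * l powr (q - 1))"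
      using gh[OF x] q l by (intro add_left_mono divide_right_mono) auto
    finally have "\<bar>w x\<bar> * \<bar>g x\<bar> \<le> \<bar>w x\<bar> * (l / p + h x / (q * l powr (q - 1)))"
      by (rule mult_left_mono) simp
    then show "norm (w x * g x) \<le> ?bound x"
      by (simp add: abs_mult algebra_simps)
  qed
  with bound show "\<bar>integral S (\<lambda>x. w x * g x)\<bar> \<le> l * W / p + V / (q * l powr (q - 1))"
    by (simp add: integral_unique)
qed

lemma trapezoid_error_has_integral:
  fixes f f' :: "real \<Rightarrow> real"
  assumes ab: "a \<le> b" and cont: "continuous_on {a..b} f"
    and f': "\<And>x. x \<in> {a<..<b} \<Longrightarrow> (f has_real_derivative f' x) (at x)"
  shows "((\<lambda>x. (x - (a + b)/2) * f' x) has_integral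
           (b - a)/2 * (f a + f b) - integral {a..b} f) {a..b}"
proof -
  let ?c = "(a + b)/2"
  have "((\<lambda>x. f x + (x - ?c) * f' x) has_integral (b - ?c) * f b - (a - ?c) * f a) {a..b}"
  proof (rule fundamental_theorem_of_calculus_interior[OF ab])
    show "continuous_on {a..b} (\<lambda>x. (x - ?c) * f x)" using cont by (intro continuous_intros)
    fix x assume "x \<in> {a<..<b}"
    then have "((\<lambda>x. (x - ?c) * f x) has_real_derivative f x + (x - ?c) * f' x) (at x)"
      by (auto intro!: derivative_eq_intros f')
    then show "((\<lambda>x. (x - ?c) * f x) has_vector_derivative f x + (x - ?c) * f' x) (at x)"
      by (simp add: has_real_derivative_iff_has_vector_derivative)
  qed
  from has_integral_diff[OF this integrable_integral[OF integrable_continuous_interval[OF cont]]]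
  have "((\<lambda>x. (x - ?c) * f' x) has_integral (b - ?c) * f b - (a - ?c) * f a - integral {a..b} f) {a..b}"
    by simp
  moreover have "(b - ?c) * f b - (a - ?c) * f a = (b - a)/2 * (f a + f b)"
    by (simp add: field_simps)
  ultimately show ?thesis by simp
qed

lemma s_alpha_m_convex_le_endpoints:
  assumes conv: "s_alpha_m_convex s \<alpha> m {a..b} D g"
    and ab: "a < b" and bm: "b / m \<in> D" and x: "x \<in> {a..b}"
  shows "g x \<le> rpow ((b - x)/(b - a)) (\<alpha> * s) * g a
               + m * (1 - rpow ((b - x)/(b - a)) (\<alpha> * s)) * g (b / m)"
proof -
  define t where "t = (b - x)/(b - a)"
  have t: "t \<in> {0..1}" using x ab by (auto simp: t_def field_simps)
  have "t * (b - a) = b - x" using ab by (simp add: t_def)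
  then have "x = t * a + (1 - t) * b" by (simp add: algebra_simps)
  then show ?thesis
    using conv ab bm t unfolding s_alpha_m_convex_def t_def[symmetric] by auto
qed

lemma trapezoid_Hoelder_constant:
  fixes d p q Q :: real
  assumes d: "0 < d" and Q: "0 \<le> Q" and q: "1 < q" and p: "p = q / (q - 1)"
  shows "(d^2 / 4) powr (1/p) * (d^2 / 2 * Q) powr (1/q) / d = d / 2 powr ((p + 1)/p) * Q powr (1/q)"
proof -
  have pq: "1/p + 1/q = 1" and exp: "(p + 1)/p = 2/p + 1/q"
    unfolding p using q by (simp_all add: field_simps)
  have four: "(4::real) powr (1/p) = 2 powr (2/p)"
    using powr_powr[of 2 2 "1/p"] by simp
  have "(d^2 / 4) powr (1/p) * (d^2 / 2 * Q) powr (1/q)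
      = (d^2) powr (1/p + 1/q) / (4 powr (1/p) * 2 powr (1/q)) * Q powr (1/q)"
    using d Q by (simp add: powr_mult powr_divide powr_add)
  also have "\<dots> = d^2 / 2 powr ((p + 1)/p) * Q powr (1/q)"
    using d unfolding pq exp four by (simp add: powr_add)
  finally show ?thesis using d by (simp add: power2_eq_square)
qed

lemma trapezoid_error_le_of_majorant:
  fixes f f' h :: "real \<Rightarrow> real" and a b p q Q :: real
  assumes ab: "a < b" and cont: "continuous_on {a..b} f"
    and f': "\<And>x. x \<in> {a<..<b} \<Longrightarrow> (f has_real_derivative f' x) (at x)"
    and majorant: "\<And>x. x \<in> {a..b} \<Longrightarrow> \<bar>f' x\<bar> powr q \<le> h x"
    and weighted_majorant: "((\<lambda>x. \<bar>x - (a + b)/2\<bar> * h x) has_integral (b - a)^2 / 2 * Q) {a..b}"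
    and q: "1 < q" and p: "p = q / (q - 1)"
  shows "\<bar>(f a + f b) / 2 - (1 / (b - a)) * integral {a..b} f\<bar>
           \<le> (b - a) / 2 powr ((p + 1)/p) * Q powr (1/q)"
proof -
  let ?E = "(b - a)/2 * (f a + f b) - integral {a..b} f"
  have trapezoid: "((\<lambda>x. (x - (a + b)/2) * f' x) has_integral ?E) {a..b}"
    using trapezoid_error_has_integral[OF _ cont f'] ab by simp
  have weight: "((\<lambda>x. \<bar>x - (a + b)/2\<bar>) has_integral (b - a)^2 / 4) {a..b}"
    using tent_weight_has_integral[OF ab order_refl] by simp
  have "0 \<le> (b - a)^2 / 2 * Q"
  proof (rule has_integral_nonneg[OF weighted_majorant])
    fix x assume "x \<in> {a..b}"
    then have "0 \<le> h x" using majorant[of x] powr_ge_zero[of "\<bar>f' x\<bar>" q] by linarith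
    then show "0 \<le> \<bar>x - (a + b)/2\<bar> * h x" by simp
  qed
  then have Q: "0 \<le> Q" using ab by (simp add: zero_le_mult_iff)
  have "\<bar>?E\<bar> \<le> ((b - a)^2 / 4) powr (1/p) * ((b - a)^2 / 2 * Q) powr (1/q)"
    using abs_integral_weighted_le_Hoelder[OF weight weighted_majorant
        has_integral_integrable[OF trapezoid] majorant q p]
    unfolding integral_unique[OF trapezoid] .
  then have "\<bar>?E\<bar> / (b - a) \<le> ((b - a)^2 / 4) powr (1/p) * ((b - a)^2 / 2 * Q) powr (1/q) / (b - a)"
    using ab by (simp add: divide_right_mono)
  also have "\<dots> = (b - a) / 2 powr ((p + 1)/p) * Q powr (1/q)"
    using ab Q q p by (intro trapezoid_Hoelder_constant) simp_all
  also have "\<bar>?E\<bar> / (b - a) = \<bar>(f a + f b) / 2 - (1 / (b - a)) * integral {a..b} f\<bar>"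
    using ab by (simp add: field_simps)
  finally show ?thesis .
qed


theorem theorem3:
  fixes f :: "real \<Rightarrow> real" and I :: "real set"
    and a b s \<alpha> m q p :: real
  assumes I: "is_interval I"
    and diff: "\<forall>x\<in>interior I. f differentiable (at x)"
    and ab: "a \<in> I" "b \<in> I" "a < b"
    and cont: "continuous_on {a..b} f"
    and L1: "deriv f absolutely_integrable_on {a..b}"
    and s: "0 < s" "s \<le> 1"
    and \<alpha>: "0 \<le> \<alpha>" "\<alpha> \<le> 1"
    and m: "0 < m" "m \<le> 1"
    and bm: "b / m \<in> interior I"
    and q: "q > 1"
    and p: "p = q / (q - 1)"
    and conv: "s_alpha_m_convex s \<alpha> m {a..b} I (\<lambda>x. \<bar>deriv f x\<bar> powr q)"
  shows "\<bar>(f a + f b) / 2 - (1 / (b - a)) * integral {a..b} f\<bar>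
         \<le> (b - a) / 2 powr ((p + 1) / p) *
            ((1 + 2 powr (\<alpha> * s) * (\<alpha> * s)) / (2 powr (\<alpha> * s) * (\<alpha> * s + 1) * (\<alpha> * s + 2))
               * \<bar>deriv f a\<bar> powr q
             + m * (1 / 2 - (1 + 2 powr (\<alpha> * s) * (\<alpha> * s)) / (2 powr (\<alpha> * s) * (\<alpha> * s + 1) * (\<alpha> * s + 2)))
               * \<bar>deriv f (b / m)\<bar> powr q) powr (1 / q)"
proof -
  define k where "k = \<alpha> * s"
  define h where "h x = rpow ((b - x)/(b - a)) k * \<bar>deriv f a\<bar> powr q
                      + m * (1 - rpow ((b - x)/(b - a)) k) * \<bar>deriv f (b / m)\<bar> powr q" for x
  have "{a..b} \<subseteq> I" using mem_is_interval_1_I[OF I ab(1,2)] by auto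
  then have "{a<..<b} \<subseteq> interior I"
    using interior_mono[of "{a..b}" I] by simp
  then have derivative: "(f has_real_derivative deriv f x) (at x)" if "x \<in> {a<..<b}" for x
    using diff that DERIV_deriv_iff_real_differentiable by blast
  have majorant: "\<bar>deriv f x\<bar> powr q \<le> h x" if "x \<in> {a..b}" for x
    using s_alpha_m_convex_le_endpoints[OF conv ab(3) interior_subset[THEN subsetD, OF bm] that]
    unfolding h_def k_def .
  have "0 \<le> k" using s \<alpha> by (simp add: k_def)
  from tent_weight_majorant_has_integral[OF ab(3) this]
  have "((\<lambda>x. \<bar>x - (a + b)/2\<bar> * h x) has_integral (b - a)^2 / 2 *
          ((1 + 2 powr k * k) / (2 powr k * (k + 1) * (k + 2)) * \<bar>deriv f a\<bar> powr q
           + m * (1 / 2 - (1 + 2 powr k * k) / (2 powr k * (k + 1) * (k + 2))) * \<bar>deriv f (b / m)\<bar> powr q))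
        {a..b}"
    unfolding h_def .
  from trapezoid_error_le_of_majorant[OF ab(3) cont derivative majorant this q p]
  show ?thesis unfolding k_def .
qed

end
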